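(* Let $d\ge2$, $\overrightarrow{w}\in(0,\infty)^d$, $S_1=\sum_{i=1}^dw_i$ and $S_2=\sum_{i=1}^dw_i^2$. Let $F_1,\dots,F_d$ be continuous distribution functions, let $C,C^*$ be $d$-dimensional copulas, and set $H=C(F_1,\dots,F_d)$, $H^*=C^*(F_1,\dots,F_d)$. Then: (i) if $C\prec C^*$, then $\mathrm{SIX}(\overrightarrow{w},H)\le\mathrm{SIX}(\overrightarrow{w},H^* )$; (ii) $\displaystyle\frac{12\,l(\overrightarrow{w})-S_2}{S_1^2-S_2}\le\mathrm{SIX}(\overrightarrow{w},H)\le1$; (iii) the upper bound in (ii) is attained if and only if $H$ is comonotonic (i.e. $C(\overrightarrow{u})=\min\{u_1,\dots,u_d\}$); (iv) the lower bound in (ii) is attained if and only if $C$ is $\overrightarrow{w^*}$-CM.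
   Context: For a random vector $\overrightarrow{X}$ with distribution function $H$ and continuous marginals $F_1,\dots,F_d$, Spearman's rho of $(X_i,X_j)$ is $\rho_S(X_i,X_j)=12\,\mathrm{Cov}(F_i(X_i),F_j(X_j))$, and the herd behavior index is $\mathrm{SIX}(\overrightarrow{w},H)=\frac{\sum_{i<j}w_iw_j\rho_S(X_i,X_j)}{\sum_{i<j}w_iw_j}$ (it depends only on the copula of $H$). For copulas, $C\prec C^*$ means $C(\overrightarrow{u})\le C^*(\overrightarrow{u})$ and $\overline{C}(\overrightarrow{u})\le\overline{C^*}(\overrightarrow{u})$ for all $\overrightarrow{u}\in[0,1]^d$, where $\overline{C}$ is the joint survival function. A copula $C$ is $\overrightarrow{v}$-CM if $\overrightarrow{U}\sim C$ satisfies $P\left(\sum_{i}v_iU_i=\frac12\sum_i v_i\right)=1$. For $\overrightarrow{w}\in(0,\infty)^d$, define $\overrightarrow{w^*}$ by $w_i^*=w_i$ if $2w_i\le\sum_jw_j$ and $w_i^*=\sum_jw_j-w_i$ otherwise; and $l(\overrightarrow{w})=\frac1{12}\left[\left(2\max_iw_i-\sum_iw_i\right)_+\right]^2$ with $x_+=\max\{x,0\}$. *)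

theory Defs
  imports "HOL-Probability.Probability"
begin

text \<open>Vectors in R^d are functions nat => real; only coordinates i < d matter.\<close>

definition unit_cube :: "nat \<Rightarrow> (nat \<Rightarrow> real) set" where
  "unit_cube d = {u. \<forall>i<d. 0 \<le> u i \<and> u i \<le> 1}"

definition cont_df :: "(real \<Rightarrow> real) \<Rightarrow> bool" where
  "cont_df F \<longleftrightarrow> mono F \<and> continuous_on UNIV F \<and>
     (F \<longlongrightarrow> 0) at_bot \<and> (F \<longlongrightarrow> 1) at_top"

definition copula_measure :: "nat \<Rightarrow> (nat \<Rightarrow> real) measure \<Rightarrow> ((nat \<Rightarrow> real) \<Rightarrow> real) \<Rightarrow> bool" where
  "copula_measure d \<mu> C \<longleftrightarrow> prob_space \<mu> \<and>
     sets \<mu> = sets (Pi\<^sub>M {..<d} (\<lambda>_. borel)) \<and>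
     (\<forall>i<d. \<forall>t\<in>{0..1}. measure \<mu> {v \<in> space \<mu>. v i \<le> t} = t) \<and>
     (\<forall>u\<in>unit_cube d. C u = measure \<mu> {v \<in> space \<mu>. \<forall>i<d. v i \<le> u i})"

definition is_copula :: "nat \<Rightarrow> ((nat \<Rightarrow> real) \<Rightarrow> real) \<Rightarrow> bool" where
  "is_copula d C \<longleftrightarrow> (\<exists>\<mu>. copula_measure d \<mu> C)"

definition copula_distr :: "nat \<Rightarrow> ((nat \<Rightarrow> real) \<Rightarrow> real) \<Rightarrow> (nat \<Rightarrow> real) measure" where
  "copula_distr d C = (SOME \<mu>. copula_measure d \<mu> C)"

definition copula_surv :: "nat \<Rightarrow> ((nat \<Rightarrow> real) \<Rightarrow> real) \<Rightarrow> (nat \<Rightarrow> real) \<Rightarrow> real" where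
  "copula_surv d C u =
     measure (copula_distr d C) {v \<in> space (copula_distr d C). \<forall>i<d. v i > u i}"

definition copula_prec :: "nat \<Rightarrow> ((nat \<Rightarrow> real) \<Rightarrow> real) \<Rightarrow> ((nat \<Rightarrow> real) \<Rightarrow> real) \<Rightarrow> bool" where
  "copula_prec d C C' \<longleftrightarrow>
     (\<forall>u\<in>unit_cube d. C u \<le> C' u \<and> copula_surv d C u \<le> copula_surv d C' u)"

definition is_CM :: "nat \<Rightarrow> (nat \<Rightarrow> real) \<Rightarrow> ((nat \<Rightarrow> real) \<Rightarrow> real) \<Rightarrow> bool" where
  "is_CM d v C \<longleftrightarrow>
     measure (copula_distr d C)
       {u \<in> space (copula_distr d C). (\<Sum>i<d. v i * u i) = (\<Sum>i<d. v i) / 2} = 1"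

definition comonotonic_copula :: "nat \<Rightarrow> ((nat \<Rightarrow> real) \<Rightarrow> real) \<Rightarrow> bool" where
  "comonotonic_copula d C \<longleftrightarrow> (\<forall>u\<in>unit_cube d. C u = Min (u ` {..<d}))"

definition has_joint_df :: "nat \<Rightarrow> 'a measure \<Rightarrow> (nat \<Rightarrow> 'a \<Rightarrow> real) \<Rightarrow> ((nat \<Rightarrow> real) \<Rightarrow> real) \<Rightarrow> bool" where
  "has_joint_df d M X H \<longleftrightarrow> prob_space M \<and> (\<forall>i<d. X i \<in> borel_measurable M) \<and>
     (\<forall>x. measure M {\<omega> \<in> space M. \<forall>i<d. X i \<omega> \<le> x i} = H x)"

definition covariance :: "'a measure \<Rightarrow> ('a \<Rightarrow> real) \<Rightarrow> ('a \<Rightarrow> real) \<Rightarrow> real" where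
  "covariance M A B =
     (\<integral>\<omega>. (A \<omega> - (\<integral>\<omega>'. A \<omega>' \<partial>M)) * (B \<omega> - (\<integral>\<omega>'. B \<omega>' \<partial>M)) \<partial>M)"

definition spearman_rho :: "'a measure \<Rightarrow> (nat \<Rightarrow> real \<Rightarrow> real) \<Rightarrow> (nat \<Rightarrow> 'a \<Rightarrow> real) \<Rightarrow> nat \<Rightarrow> nat \<Rightarrow> real" where
  "spearman_rho M F X i j = 12 * covariance M (\<lambda>\<omega>. F i (X i \<omega>)) (\<lambda>\<omega>. F j (X j \<omega>))"

definition pairs_lt :: "nat \<Rightarrow> (nat \<times> nat) set" where
  "pairs_lt d = {(i, j). i < j \<and> j < d}"

definition SIX :: "nat \<Rightarrow> (nat \<Rightarrow> real) \<Rightarrow> 'a measure \<Rightarrow> (nat \<Rightarrow> real \<Rightarrow> real) \<Rightarrow> (nat \<Rightarrow> 'a \<Rightarrow> real) \<Rightarrow> real" where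
  "SIX d w M F X =
     (\<Sum>(i, j)\<in>pairs_lt d. w i * w j * spearman_rho M F X i j) / (\<Sum>(i, j)\<in>pairs_lt d. w i * w j)"

definition wstar :: "nat \<Rightarrow> (nat \<Rightarrow> real) \<Rightarrow> nat \<Rightarrow> real" where
  "wstar d w i = (if 2 * w i \<le> (\<Sum>j<d. w j) then w i else (\<Sum>j<d. w j) - w i)"

definition lfun :: "nat \<Rightarrow> (nat \<Rightarrow> real) \<Rightarrow> real" where
  "lfun d w = (1/12) * (max (2 * Max (w ` {..<d}) - (\<Sum>i<d. w i)) 0)\<^sup>2"

end

theory Submission
  imports Defs
begin

text \<open>
  Put U_i = F_i(X_i). By the probability integral transform U is distributed according to the
  law \<mu> of C, the unique probability measure with uniform marginals and distribution function C,
  so \<rho>_S(X_i, X_j) = 12 c_ij with c_ij = Cov(U_i, U_j), and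
  SIX = (12 Var(\<Sum> w_i U_i) - S_2) / (S_1^2 - S_2).
  (i) By Hoeffding's formula E[U_i U_j] = \<integral>\<integral> P(U_i > s, U_j > t) ds dt, each c_ij is monotone
  in the survival function.
  (ii), (iii) c_ij \<le> 1/12 = Var U_i, with equality iff U_i = U_j almost surely, and this holds
  for all pairs iff C(u) = min(u_1, ..., u_d).
  (ii), (iv) If the largest weight w_m exceeds S_1/2, then w = w* + \<delta> e_m with
  \<delta> = 2 w_m - S_1 and w*_m = \<Sum>_{i \<noteq> m} w_i, hence
  Var(\<Sum> w_i U_i) = Var(\<Sum> w*_i U_i) + 2 \<delta> \<Sum>_{i \<noteq> m} w_i (1/12 + c_im) + \<delta>^2/12 \<ge> l(w),
  where the middle term is nonnegative because c_im \<ge> -1/12. Equality holds iff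
  \<Sum> w*_i U_i is almost surely constant, i.e. iff C is w*-CM; if no weight exceeds S_1/2
  then w* = w, \<delta> = 0 and the same conclusion holds trivially.
\<close>

lemma sets_Collect_all_less:
  fixes n :: nat
  assumes "\<And>i. i < n \<Longrightarrow> {x\<in>space M. P i x} \<in> sets M"
  shows "{x\<in>space M. \<forall>i<n. P i x} \<in> sets M"
  using sets.sets_Collect_finite_All[of "{..<n}" M P] assms by (simp add: lessThan_iff)

section \<open>Continuous distribution functions\<close>

lemma cont_df_nonneg: "cont_df F \<Longrightarrow> 0 \<le> F x"
proof -
  assume F: "cont_df F"
  then have "(F \<longlongrightarrow> 0) at_bot" "mono F" unfolding cont_df_def by auto
  moreover have "eventually (\<lambda>y. F y \<le> F x) at_bot"
    unfolding eventually_at_bot_linorder using \<open>mono F\<close> by (auto dest: monoD)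
  ultimately show ?thesis by (intro tendsto_upperbound[of F 0 at_bot]) simp_all
qed

lemma cont_df_le_one: "cont_df F \<Longrightarrow> F x \<le> 1"
proof -
  assume F: "cont_df F"
  then have "(F \<longlongrightarrow> 1) at_top" "mono F" unfolding cont_df_def by auto
  moreover have "eventually (\<lambda>y. F x \<le> F y) at_top"
    unfolding eventually_at_top_linorder using \<open>mono F\<close> by (auto dest: monoD)
  ultimately show ?thesis by (intro tendsto_lowerbound[of F 1 at_top]) simp_all
qed

lemma borel_measurable_cont_df: "cont_df F \<Longrightarrow> F \<in> borel_measurable borel"
  unfolding cont_df_def by (auto intro: borel_measurable_continuous_onI)

lemma cont_df_quantile:
  assumes F: "cont_df F" and t: "0 < t" "t < 1"
  shows "\<exists>x. F x = t \<and> (\<forall>z. F z \<le> t \<longleftrightarrow> z \<le> x)"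
proof -
  have mono: "mono F" and cont: "continuous_on UNIV F"
    and lim0: "(F \<longlongrightarrow> 0) at_bot" and lim1: "(F \<longlongrightarrow> 1) at_top"
    using F unfolding cont_df_def by auto
  define S where "S = {z. F z \<le> t}"
  have "eventually (\<lambda>z. F z < t) at_bot" using lim0 t by (intro order_tendstoD(2)) auto
  then obtain z0 where "F z0 < t" by (auto simp: eventually_at_bot_linorder)
  then have "z0 \<in> S" unfolding S_def by simp
  then have ne: "S \<noteq> {}" by blast
  have "eventually (\<lambda>z. t < F z) at_top" using lim1 t by (intro order_tendstoD(1)) auto
  then obtain N where N: "\<And>z. N \<le> z \<Longrightarrow> t < F z" by (auto simp: eventually_at_top_linorder)
  have below_N: "z < N" if "z \<in> S" for z
  proof (rule ccontr)
    assume "\<not> z < N"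
    then have "t < F z" using N by simp
    then show False using that unfolding S_def by simp
  qed
  then have bdd: "bdd_above S" by (meson bdd_above.I less_imp_le)
  have "closed S" unfolding S_def by (intro closed_Collect_le cont continuous_on_const)
  define x where "x = Sup S"
  have xS: "x \<in> S" unfolding x_def by (rule closed_contains_Sup[OF ne bdd \<open>closed S\<close>])
  have upper: "z \<le> x" if "z \<in> S" for z unfolding x_def using that bdd by (rule cSup_upper)
  have iff: "F z \<le> t \<longleftrightarrow> z \<le> x" for z
    using upper xS mono unfolding S_def by (auto dest: monoD[of F z x])
  have "F x \<le> t" "t \<le> F N" "x \<le> N" using xS N[of N] below_N[OF xS] unfolding S_def by auto
  then obtain y where "x \<le> y" "y \<le> N" "F y = t"
    using IVT'[of F x t N] continuous_on_subset[OF cont] by auto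
  moreover from this(3) have "y \<le> x" using iff[of y] by simp
  ultimately have "F x = t" by (metis order_antisym)
  then show ?thesis using iff by blast
qed

section \<open>Sums over pairs and the weights w*\<close>

lemma finite_pairs_lt: "finite (pairs_lt n)"
proof -
  have "pairs_lt n \<subseteq> {..<n} \<times> {..<n}" unfolding pairs_lt_def by auto
  then show ?thesis by (rule finite_subset) auto
qed

lemma sum_pairs_lt_Suc:
  fixes f :: "nat \<Rightarrow> nat \<Rightarrow> real"
  shows "(\<Sum>(i, j)\<in>pairs_lt (Suc n). f i j) = (\<Sum>(i, j)\<in>pairs_lt n. f i j) + (\<Sum>i<n. f i n)"
proof -
  have "pairs_lt (Suc n) = pairs_lt n \<union> (\<lambda>i. (i, n)) ` {..<n}"
    and "pairs_lt n \<inter> (\<lambda>i. (i, n)) ` {..<n} = {}"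
    unfolding pairs_lt_def by auto
  then have "(\<Sum>(i, j)\<in>pairs_lt (Suc n). f i j) =
      (\<Sum>(i, j)\<in>pairs_lt n. f i j) + (\<Sum>(i, j)\<in>(\<lambda>i. (i, n)) ` {..<n}. f i j)"
    using finite_pairs_lt by (simp add: sum.union_disjoint)
  also have "(\<Sum>(i, j)\<in>(\<lambda>i. (i, n)) ` {..<n}. f i j) = (\<Sum>i<n. f i n)"
    by (subst sum.reindex) (auto simp: inj_on_def)
  finally show ?thesis .
qed

lemma sum_sym_eq_diag_plus_pairs:
  fixes f :: "nat \<Rightarrow> nat \<Rightarrow> real"
  assumes "\<And>i j. f i j = f j i"
  shows "(\<Sum>i<n. \<Sum>j<n. f i j) = (\<Sum>i<n. f i i) + 2 * (\<Sum>(i, j)\<in>pairs_lt n. f i j)"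
proof (induction n)
  case 0
  then show ?case by (simp add: pairs_lt_def)
next
  case (Suc n)
  have "(\<Sum>i<Suc n. \<Sum>j<Suc n. f i j) = (\<Sum>i<n. \<Sum>j<n. f i j) + (\<Sum>i<n. f i n) + (\<Sum>j<n. f n j) + f n n"
    by (simp add: sum.distrib)
  also have "(\<Sum>j<n. f n j) = (\<Sum>i<n. f i n)" using assms by simp
  finally show ?case using Suc by (simp add: sum_pairs_lt_Suc)
qed

lemma square_sum_eq_sum_squares_plus_pairs:
  fixes w :: "nat \<Rightarrow> real"
  shows "(\<Sum>i<d. w i)\<^sup>2 = (\<Sum>i<d. (w i)\<^sup>2) + 2 * (\<Sum>(i, j)\<in>pairs_lt d. w i * w j)"
  unfolding power2_eq_square sum_product by (rule sum_sym_eq_diag_plus_pairs) simp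

lemma sum_pairs_weights_pos:
  fixes w :: "nat \<Rightarrow> real"
  assumes "2 \<le> d" and "\<forall>i<d. 0 < w i"
  shows "0 < (\<Sum>(i, j)\<in>pairs_lt d. w i * w j)"
proof (rule sum_pos2[OF finite_pairs_lt])
  show "(0, 1) \<in> pairs_lt d" using assms(1) unfolding pairs_lt_def by auto
  show "0 < (case (0, 1) of (i, j) \<Rightarrow> w i * w j)" using assms by simp
  show "0 \<le> (case x of (i, j) \<Rightarrow> w i * w j)" if "x \<in> pairs_lt d" for x
    using that assms(2) by (auto simp: pairs_lt_def less_imp_le)
qed

lemma wstar_decomposition:
  fixes w :: "nat \<Rightarrow> real"
  assumes wpos: "\<forall>i<d. 0 < w i" and m: "m < d" "\<forall>i<d. w i \<le> w m" and i: "i < d"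
  shows "w i = wstar d w i + (if i = m then max (2 * w m - (\<Sum>k<d. w k)) 0 else 0)"
proof (cases "2 * w m \<le> (\<Sum>k<d. w k)")
  case True
  then show ?thesis using m(2) i unfolding wstar_def by force
next
  case False
  have "2 * w i \<le> (\<Sum>k<d. w k)" if "i \<noteq> m"
  proof -
    have "(\<Sum>k\<in>{i, m}. w k) \<le> (\<Sum>k<d. w k)"
      using i m(1) wpos by (intro sum_mono2) (auto intro: less_imp_le)
    then show ?thesis using that m(2)[rule_format, OF i] by simp
  qed
  then show ?thesis using False unfolding wstar_def by auto
qed

lemma wstar_at_max:
  fixes w :: "nat \<Rightarrow> real"
  assumes "m < d" and "(\<Sum>k<d. w k) < 2 * w m"
  shows "wstar d w m = (\<Sum>k\<in>{..<d} - {m}. w k)"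
  using assms unfolding wstar_def by (simp add: sum_diff1)

section \<open>The law of a copula\<close>

locale copula_law =
  fixes d :: nat and \<mu> :: "(nat \<Rightarrow> real) measure" and C :: "(nat \<Rightarrow> real) \<Rightarrow> real"
  assumes copula_measure: "copula_measure d \<mu> C"
begin

lemma sets_eq[measurable_cong]: "sets \<mu> = sets (Pi\<^sub>M {..<d} (\<lambda>_. borel))"
  using copula_measure unfolding copula_measure_def by auto

lemma space_eq: "space \<mu> = PiE {..<d} (\<lambda>_. UNIV)"
  using sets_eq_imp_space_eq[OF sets_eq] by (simp add: space_PiM)

sublocale prob_space \<mu>
  using copula_measure unfolding copula_measure_def by auto

lemma measurable_coordinate[measurable]: "i < d \<Longrightarrow> (\<lambda>v. v i) \<in> borel_measurable \<mu>"
  by (simp add: measurable_cong_sets[OF sets_eq refl])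

lemma prob_coordinate_le: "i < d \<Longrightarrow> 0 \<le> t \<Longrightarrow> t \<le> 1 \<Longrightarrow> prob {v\<in>space \<mu>. v i \<le> t} = t"
  using copula_measure unfolding copula_measure_def by auto

lemma copula_eq_prob: "u \<in> unit_cube d \<Longrightarrow> C u = prob {v\<in>space \<mu>. \<forall>i<d. v i \<le> u i}"
  using copula_measure unfolding copula_measure_def by auto

lemma AE_coordinate_pos: "i < d \<Longrightarrow> AE v in \<mu>. 0 < v i"
  using prob_eq_0[of "{v\<in>space \<mu>. v i \<le> 0}"] by (auto simp: prob_coordinate_le elim!: AE_mp)

lemma AE_coordinate_less_one: "i < d \<Longrightarrow> AE v in \<mu>. v i < 1"
proof -
  assume i: "i < d"
  have "prob {v\<in>space \<mu>. 1 \<le> v i} \<le> 0"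
  proof (rule dense_ge_bounded[of 0 1])
    fix e :: real assume e: "0 < e" "e < 1"
    have "prob {v\<in>space \<mu>. 1 \<le> v i} \<le> prob (space \<mu> - {v\<in>space \<mu>. v i \<le> 1 - e})"
      using i e by (intro finite_measure_mono) auto
    also have "\<dots> = e"
      using i e by (subst prob_compl) (auto simp: prob_coordinate_le)
    finally show "prob {v\<in>space \<mu>. 1 \<le> v i} \<le> e" .
  qed simp
  then have "prob {v\<in>space \<mu>. 1 \<le> v i} = 0" by (simp add: measure_le_0_iff)
  then have "AE v in \<mu>. v \<notin> {v\<in>space \<mu>. 1 \<le> v i}"
    using i by (subst prob_eq_0[symmetric]) auto
  then show ?thesis by (auto elim!: AE_mp)
qed

lemma AE_in_open_cube: "AE v in \<mu>. \<forall>i<d. 0 < v i \<and> v i < 1"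
proof -
  have "AE v in \<mu>. \<forall>i\<in>{..<d}. 0 < v i \<and> v i < 1"
    by (intro AE_finite_allI) (auto intro: AE_conjI AE_coordinate_pos AE_coordinate_less_one)
  then show ?thesis by auto
qed

lemma prob_box_restrict:
  assumes J: "J \<subseteq> {..<d}" and u: "\<And>i. i < d \<Longrightarrow> i \<notin> J \<Longrightarrow> 1 \<le> u i"
  shows "prob {v\<in>space \<mu>. \<forall>i\<in>J. v i \<le> u i} = prob {v\<in>space \<mu>. \<forall>i<d. v i \<le> u i}"
proof (rule measure_eq_AE)
  show "AE v in \<mu>. (v \<in> {v\<in>space \<mu>. \<forall>i\<in>J. v i \<le> u i}) = (v \<in> {v\<in>space \<mu>. \<forall>i<d. v i \<le> u i})"
    using AE_in_open_cube by eventually_elim (use J u in \<open>force simp: less_imp_le\<close>)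
  show "{v\<in>space \<mu>. \<forall>i\<in>J. v i \<le> u i} \<in> sets \<mu>"
    using J finite_subset[OF J] by (intro sets.sets_Collect_finite_All) (auto, measurable)
  show "{v\<in>space \<mu>. \<forall>i<d. v i \<le> u i} \<in> sets \<mu>"
    by (rule sets_Collect_all_less) measurable
qed

lemma prob_box_single:
  assumes "i < d" "0 \<le> t" "t \<le> 1"
  shows "prob {v\<in>space \<mu>. \<forall>k<d. v k \<le> (if k = i then t else 1)} = t"
  using prob_box_restrict[of "{i}" "\<lambda>k. if k = i then t else 1"] prob_coordinate_le[of i t] assms
  by simp

lemma integrable_bounded_on_cube:
  fixes f :: "(nat \<Rightarrow> real) \<Rightarrow> real" and B :: real
  assumes "f \<in> borel_measurable \<mu>" and "\<And>v. \<forall>i<d. 0 < v i \<and> v i < 1 \<Longrightarrow> \<bar>f v\<bar> \<le> B"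
  shows "integrable \<mu> f"
proof (rule integrable_const_bound[where B=B])
  show "AE v in \<mu>. norm (f v) \<le> B"
    using AE_in_open_cube by eventually_elim (simp add: assms(2))
qed (fact assms(1))

lemma integrable_coordinate: "i < d \<Longrightarrow> integrable \<mu> (\<lambda>v. v i)"
  by (rule integrable_bounded_on_cube[where B=1]) auto

lemma integrable_coordinate_mult: "i < d \<Longrightarrow> j < d \<Longrightarrow> integrable \<mu> (\<lambda>v. v i * v j)"
  by (rule integrable_bounded_on_cube[where B=1]) (auto simp: abs_mult intro!: mult_le_one)

lemma integrable_centred_mult:
  "i < d \<Longrightarrow> j < d \<Longrightarrow> integrable \<mu> (\<lambda>v. (v i - 1/2) * (v j - 1/2))"
  by (rule integrable_bounded_on_cube[where B=1]) (auto simp: abs_mult intro!: mult_le_one)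

lemma uniform_distributed_coordinate:
  "i < d \<Longrightarrow> distributed \<mu> lborel (\<lambda>v. v i) (\<lambda>x. indicator {0..1::real} x / measure lborel {0..1::real})"
  by (subst uniform_distributed_iff) (auto simp: prob_coordinate_le)

lemma expectation_coordinate: "i < d \<Longrightarrow> expectation (\<lambda>v. v i) = 1/2"
  using uniform_distributed_expectation[OF uniform_distributed_coordinate] by simp

lemma variance_coordinate: "i < d \<Longrightarrow> variance (\<lambda>v. v i) = 1/12"
  using uniform_distributed_variance[OF uniform_distributed_coordinate] by simp

text \<open>Since every coordinate has mean 1/2, these are Cov(U_i, U_j) and Var(\<Sum> a_i U_i) for U \<sim> \<mu>.\<close>

definition coord_cov :: "nat \<Rightarrow> nat \<Rightarrow> real" where
  "coord_cov i j = (\<integral>v. (v i - 1/2) * (v j - 1/2) \<partial>\<mu>)"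

definition lincomb_dev :: "(nat \<Rightarrow> real) \<Rightarrow> (nat \<Rightarrow> real) \<Rightarrow> real" where
  "lincomb_dev a v = (\<Sum>i<d. a i * (v i - 1/2))"

definition lincomb_var :: "(nat \<Rightarrow> real) \<Rightarrow> real" where
  "lincomb_var a = (\<integral>v. (lincomb_dev a v)\<^sup>2 \<partial>\<mu>)"

lemma coord_cov_sym: "coord_cov i j = coord_cov j i"
  unfolding coord_cov_def by (simp add: mult.commute)

lemma coord_cov_diag: "i < d \<Longrightarrow> coord_cov i i = 1/12"
  using variance_coordinate[of i] expectation_coordinate[of i]
  unfolding coord_cov_def by (simp add: power2_eq_square)

lemma coord_cov_eq_moment: "i < d \<Longrightarrow> j < d \<Longrightarrow> coord_cov i j = (\<integral>v. v i * v j \<partial>\<mu>) - 1/4"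
proof -
  assume ij: "i < d" "j < d"
  have "coord_cov i j = (\<integral>v. v i * v j - (1/2) * v i - (1/2) * v j + 1/4 \<partial>\<mu>)"
    unfolding coord_cov_def by (intro Bochner_Integration.integral_cong refl) (simp add: algebra_simps)
  also have "\<dots> = (\<integral>v. v i * v j \<partial>\<mu>) - (1/2) * (\<integral>v. v i \<partial>\<mu>) - (1/2) * (\<integral>v. v j \<partial>\<mu>) + 1/4"
    using ij integrable_coordinate_mult integrable_coordinate by (simp add: prob_space)
  finally show ?thesis using expectation_coordinate ij by simp
qed

lemma lincomb_dev_mult:
  "lincomb_dev a v * (v m - 1/2) = (\<Sum>i<d. a i * ((v i - 1/2) * (v m - 1/2)))"
  unfolding lincomb_dev_def sum_distrib_right by (simp add: ac_simps)

lemma lincomb_dev_square: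
  "(lincomb_dev a v)\<^sup>2 = (\<Sum>i<d. \<Sum>j<d. a i * a j * ((v i - 1/2) * (v j - 1/2)))"
  unfolding lincomb_dev_def power2_eq_square sum_product by (intro sum.cong refl) (simp add: ac_simps)

lemma integrable_lincomb_dev_square: "integrable \<mu> (\<lambda>v. (lincomb_dev a v)\<^sup>2)"
  unfolding lincomb_dev_square by (auto intro!: integrable_sum integrable_mult_right integrable_centred_mult)

lemma integrable_lincomb_dev_mult: "m < d \<Longrightarrow> integrable \<mu> (\<lambda>v. lincomb_dev a v * (v m - 1/2))"
  unfolding lincomb_dev_mult by (auto intro!: integrable_sum integrable_mult_right integrable_centred_mult)

lemma integral_lincomb_dev_mult:
  "m < d \<Longrightarrow> (\<integral>v. lincomb_dev a v * (v m - 1/2) \<partial>\<mu>) = (\<Sum>i<d. a i * coord_cov i m)"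
  unfolding lincomb_dev_mult coord_cov_def
  by (subst Bochner_Integration.integral_sum) (auto intro!: integrable_mult_right integrable_centred_mult)

lemma lincomb_var_expand: "lincomb_var a = (\<Sum>i<d. \<Sum>j<d. a i * a j * coord_cov i j)"
proof -
  have "lincomb_var a = (\<Sum>i<d. \<integral>v. (\<Sum>j<d. a i * a j * ((v i - 1/2) * (v j - 1/2))) \<partial>\<mu>)"
    unfolding lincomb_var_def lincomb_dev_square
    by (subst Bochner_Integration.integral_sum)
      (auto intro!: integrable_sum integrable_mult_right integrable_centred_mult)
  also have "\<dots> = (\<Sum>i<d. \<Sum>j<d. a i * a j * coord_cov i j)"
    unfolding coord_cov_def
    by (intro sum.cong refl, subst Bochner_Integration.integral_sum)
      (auto intro!: integrable_mult_right integrable_centred_mult)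
  finally show ?thesis .
qed

lemma lincomb_var_nonneg: "0 \<le> lincomb_var a"
  unfolding lincomb_var_def by simp

lemma lincomb_var_eq_0_iff: "lincomb_var a = 0 \<longleftrightarrow> (AE v in \<mu>. lincomb_dev a v = 0)"
  unfolding lincomb_var_def
  by (subst integral_nonneg_eq_0_iff_AE) (auto intro: integrable_lincomb_dev_square)

lemma lincomb_var_eq_0_imp_cov:
  assumes "lincomb_var a = 0" "m < d"
  shows "(\<Sum>i<d. a i * coord_cov i m) = 0"
proof -
  have "AE v in \<mu>. lincomb_dev a v * (v m - 1/2) = 0"
    using assms(1) unfolding lincomb_var_eq_0_iff by eventually_elim simp
  then have "(\<integral>v. lincomb_dev a v * (v m - 1/2) \<partial>\<mu>) = 0"
    by (simp add: integral_eq_zero_AE)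
  then show ?thesis using integral_lincomb_dev_mult[OF assms(2)] by simp
qed

lemma integral_square_pair:
  assumes "i < d" "j < d"
  shows "(\<integral>v. ((v i - 1/2) + s * (v j - 1/2))\<^sup>2 \<partial>\<mu>) = (1 + s\<^sup>2) / 12 + 2 * s * coord_cov i j"
proof -
  have "(\<integral>v. ((v i - 1/2) + s * (v j - 1/2))\<^sup>2 \<partial>\<mu>) =
     (\<integral>v. (v i - 1/2) * (v i - 1/2) + (s\<^sup>2 * ((v j - 1/2) * (v j - 1/2)) + 2 * s * ((v i - 1/2) * (v j - 1/2))) \<partial>\<mu>)"
    by (intro Bochner_Integration.integral_cong refl) (simp add: power2_eq_square algebra_simps)
  also have "\<dots> = coord_cov i i + s\<^sup>2 * coord_cov j j + 2 * s * coord_cov i j"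
    unfolding coord_cov_def using assms
    by (simp add: integrable_add integrable_mult_right integrable_centred_mult)
  finally show ?thesis using assms by (simp add: coord_cov_diag algebra_simps)
qed

lemma coord_cov_le: "i < d \<Longrightarrow> j < d \<Longrightarrow> coord_cov i j \<le> 1/12"
proof -
  assume ij: "i < d" "j < d"
  have "0 \<le> (\<integral>v. ((v i - 1/2) + (-1) * (v j - 1/2))\<^sup>2 \<partial>\<mu>)" by simp
  then show ?thesis unfolding integral_square_pair[OF ij] by simp
qed

lemma coord_cov_ge: "i < d \<Longrightarrow> j < d \<Longrightarrow> -1/12 \<le> coord_cov i j"
proof -
  assume ij: "i < d" "j < d"
  have "0 \<le> (\<integral>v. ((v i - 1/2) + 1 * (v j - 1/2))\<^sup>2 \<partial>\<mu>)" by simp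
  then show ?thesis unfolding integral_square_pair[OF ij] by simp
qed

lemma coord_cov_eq_imp_AE_eq:
  assumes ij: "i < d" "j < d" and cov: "coord_cov i j = 1/12"
  shows "AE v in \<mu>. v i = v j"
proof -
  have "(\<integral>v. (v i - v j)\<^sup>2 \<partial>\<mu>) = 0"
    using integral_square_pair[OF ij, of "-1"] cov by simp
  moreover have "integrable \<mu> (\<lambda>v. (v i - v j)\<^sup>2)"
  proof (rule integrable_bounded_on_cube[where B=1])
    fix v :: "nat \<Rightarrow> real" assume "\<forall>i<d. 0 < v i \<and> v i < 1"
    then have "0 < v i" "v i < 1" "0 < v j" "v j < 1" using ij by auto
    then show "\<bar>(v i - v j)\<^sup>2\<bar> \<le> 1" by (simp add: abs_square_le_1 abs_le_iff)
  qed (use ij in measurable)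
  ultimately have "AE v in \<mu>. (v i - v j)\<^sup>2 = 0"
    by (subst (asm) integral_nonneg_eq_0_iff_AE) auto
  then show ?thesis by eventually_elim simp
qed

lemma prob_box_eq_copula:
  "prob {v\<in>space \<mu>. \<forall>i<d. v i \<le> u i} = (if \<exists>i<d. u i < 0 then 0 else C (\<lambda>i. min (u i) 1))"
proof (cases "\<exists>i<d. u i < 0")
  case True
  then obtain i where i: "i < d" "u i < 0" by auto
  have "prob {v\<in>space \<mu>. \<forall>i<d. v i \<le> u i} \<le> prob {v\<in>space \<mu>. v i \<le> 0}"
    using i by (intro finite_measure_mono) (auto dest!: spec[of _ i])
  also have "\<dots> = 0" using prob_coordinate_le[OF i(1), of 0] by simp
  finally show ?thesis using True by (simp add: measure_le_0_iff)
next
  case False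
  define J where "J = {i. i < d \<and> u i < 1}"
  have "(\<lambda>i. min (u i) 1) \<in> unit_cube d" using False unfolding unit_cube_def by auto
  then have "C (\<lambda>i. min (u i) 1) = prob {v\<in>space \<mu>. \<forall>i<d. v i \<le> min (u i) 1}"
    by (rule copula_eq_prob)
  also have "\<dots> = prob {v\<in>space \<mu>. \<forall>i\<in>J. v i \<le> min (u i) 1}"
    by (rule prob_box_restrict[symmetric]) (auto simp: J_def)
  also have "{v\<in>space \<mu>. \<forall>i\<in>J. v i \<le> min (u i) 1} = {v\<in>space \<mu>. \<forall>i\<in>J. v i \<le> u i}"
    by (auto simp: J_def)
  also have "prob \<dots> = prob {v\<in>space \<mu>. \<forall>i<d. v i \<le> u i}"
    by (rule prob_box_restrict) (auto simp: J_def)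
  finally show ?thesis using False by (simp only: if_False)
qed

end

lemma sets_PiM_borel_eq_sigma_boxes:
  fixes d :: nat
  defines "\<Omega> \<equiv> PiE {..<d} (\<lambda>_. UNIV :: real set)"
  shows "sets (Pi\<^sub>M {..<d} (\<lambda>_. borel)) = sigma_sets \<Omega> (range (\<lambda>u. {f\<in>\<Omega>. \<forall>i<d. f i \<le> u i}))"
proof -
  define G where "G = range (\<lambda>u. {f\<in>\<Omega>. \<forall>i<d. f i \<le> u i})"
  have G_eq: "{{f\<in>{..<d} \<rightarrow>\<^sub>E (UNIV::real set). \<forall>i\<in>{..<d}. f i \<in> A i} | A. A \<in> {..<d} \<rightarrow> range atMost} = G"
  proof (intro equalityI subsetI)
    fix X assume "X \<in> {{f\<in>{..<d} \<rightarrow>\<^sub>E (UNIV::real set). \<forall>i\<in>{..<d}. f i \<in> A i} | A. A \<in> {..<d} \<rightarrow> range atMost}"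
    then obtain A where X: "X = {f\<in>{..<d} \<rightarrow>\<^sub>E UNIV. \<forall>i\<in>{..<d}. f i \<in> A i}"
      and A: "A \<in> {..<d} \<rightarrow> range atMost"
      by blast
    define u where "u i = (SOME t. A i = {..t})" for i
    have "A i = {..u i}" if "i < d" for i
    proof -
      have "\<exists>t. A i = {..t}" using A that by auto
      then show ?thesis unfolding u_def by (rule someI_ex)
    qed
    then have "X = {f\<in>\<Omega>. \<forall>i<d. f i \<le> u i}" unfolding X \<Omega>_def by auto
    then show "X \<in> G" unfolding G_def by auto
  next
    fix X assume "X \<in> G"
    then obtain u where X: "X = {f\<in>\<Omega>. \<forall>i<d. f i \<le> u i}" unfolding G_def by auto
    have "X = {f\<in>{..<d} \<rightarrow>\<^sub>E UNIV. \<forall>i\<in>{..<d}. f i \<in> (\<lambda>i. {..u i}) i}"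
      unfolding X \<Omega>_def by auto
    moreover have "(\<lambda>i. {..u i}) \<in> {..<d} \<rightarrow> range atMost" by auto
    ultimately show "X \<in> {{f\<in>{..<d} \<rightarrow>\<^sub>E (UNIV::real set). \<forall>i\<in>{..<d}. f i \<in> A i} | A. A \<in> {..<d} \<rightarrow> range atMost}"
      by (intro CollectI exI[of _ "\<lambda>i. {..u i}"] conjI) simp_all
  qed
  have "sets (Pi\<^sub>M {..<d} (\<lambda>_. borel::real measure)) = sets (Pi\<^sub>M {..<d} (\<lambda>_. sigma UNIV (range atMost)))"
    by (simp add: borel_eq_atMost[symmetric])
  also have "\<dots> = sets (sigma \<Omega> G)"
    unfolding \<Omega>_def
  proof (subst sets_PiM_sigma[of "{..<d}" "\<lambda>_. range atMost" "\<lambda>_. UNIV" "{{..<d}}"])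
    show "\<exists>S\<subseteq>range atMost. countable S \<and> (UNIV::real set) = \<Union> S" for i
      by (intro exI[of _ "range (\<lambda>n::nat. {..real n})"]) (auto intro: real_arch_simple)
  qed (simp_all add: G_eq)
  also have "\<dots> = sigma_sets \<Omega> G" by (rule sets_measure_of) (auto simp: G_def)
  finally show ?thesis unfolding G_def .
qed

text \<open>The boxes below u form an \<inter>-stable generator of the product \<sigma>-algebra.\<close>

lemma copula_measure_unique:
  assumes "copula_measure d \<mu>1 C" and "copula_measure d \<mu>2 C"
  shows "\<mu>1 = \<mu>2"
proof -
  interpret A: copula_law d \<mu>1 C by (rule copula_law.intro) fact
  interpret B: copula_law d \<mu>2 C by (rule copula_law.intro) fact
  define \<Omega> where "\<Omega> = PiE {..<d} (\<lambda>_. UNIV :: real set)"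
  define G where "G = range (\<lambda>u. {f\<in>\<Omega>. \<forall>i<d. f i \<le> u i})"
  show ?thesis
  proof (rule measure_eqI_generator_eq[where E=G and \<Omega>=\<Omega> and A="\<lambda>n. {f\<in>\<Omega>. \<forall>i<d. f i \<le> real n}"])
    show "Int_stable G"
    proof (rule Int_stableI)
      fix X Y assume "X \<in> G" "Y \<in> G"
      then obtain u u' where "X = {f\<in>\<Omega>. \<forall>i<d. f i \<le> u i}" "Y = {f\<in>\<Omega>. \<forall>i<d. f i \<le> u' i}"
        unfolding G_def by auto
      then have "X \<inter> Y = {f\<in>\<Omega>. \<forall>i<d. f i \<le> min (u i) (u' i)}" by auto
      then show "X \<inter> Y \<in> G" unfolding G_def by (intro rev_image_eqI[of "\<lambda>i. min (u i) (u' i)"]) auto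
    qed
    show "G \<subseteq> Pow \<Omega>" unfolding G_def by auto
    show "sets \<mu>1 = sigma_sets \<Omega> G" "sets \<mu>2 = sigma_sets \<Omega> G"
      unfolding A.sets_eq B.sets_eq G_def \<Omega>_def by (simp_all add: sets_PiM_borel_eq_sigma_boxes)
    fix X assume "X \<in> G"
    then obtain u where "X = {f\<in>\<Omega>. \<forall>i<d. f i \<le> u i}" unfolding G_def by auto
    then have "X = {v\<in>space \<mu>1. \<forall>i<d. v i \<le> u i}" "X = {v\<in>space \<mu>2. \<forall>i<d. v i \<le> u i}"
      unfolding \<Omega>_def A.space_eq B.space_eq by auto
    then show "emeasure \<mu>1 X = emeasure \<mu>2 X"
      using A.prob_box_eq_copula[of u] B.prob_box_eq_copula[of u]
      by (simp add: A.emeasure_eq_measure B.emeasure_eq_measure)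
  next
    show "range (\<lambda>n. {f\<in>\<Omega>. \<forall>i<d. f i \<le> real n}) \<subseteq> G" unfolding G_def by auto
    have "\<exists>n::nat. \<forall>i<d. f i \<le> real n" for f :: "nat \<Rightarrow> real"
    proof -
      obtain n :: nat where "(\<Sum>i<d. \<bar>f i\<bar>) \<le> real n" using real_arch_simple by blast
      moreover have "f i \<le> (\<Sum>i<d. \<bar>f i\<bar>)" if "i < d" for i
        using that member_le_sum[of i "{..<d}" "\<lambda>i. \<bar>f i\<bar>"] by force
      ultimately show ?thesis by (meson order_trans)
    qed
    then show "(\<Union>n. {f\<in>\<Omega>. \<forall>i<d. f i \<le> real n}) = \<Omega>" by auto
    show "emeasure \<mu>1 {f\<in>\<Omega>. \<forall>i<d. f i \<le> real n} \<noteq> \<infinity>" for n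
      by (simp add: A.emeasure_eq_measure)
  qed
qed

lemma copula_distr_eq: "copula_measure d \<mu> C \<Longrightarrow> copula_distr d C = \<mu>"
  unfolding copula_distr_def by (rule some_equality) (auto intro: copula_measure_unique)

context copula_law
begin

lemma copula_distr_self[simp]: "copula_distr d C = \<mu>"
  using copula_distr_eq[OF copula_measure] .

lemma copula_surv_eq: "copula_surv d C u = prob {v\<in>space \<mu>. \<forall>i<d. u i < v i}"
  unfolding copula_surv_def by simp

lemma is_CM_iff_lincomb_var_eq_0: "is_CM d a C \<longleftrightarrow> lincomb_var a = 0"
proof -
  have dev: "lincomb_dev a v = (\<Sum>i<d. a i * v i) - (\<Sum>i<d. a i) / 2" for v
    unfolding lincomb_dev_def by (simp add: algebra_simps sum_subtractf sum_divide_distrib)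
  have [measurable]: "(\<lambda>v. \<Sum>i<d. a i * v i) \<in> borel_measurable \<mu>"
    by (rule borel_measurable_sum) (simp add: borel_measurable_times)
  have "prob {v\<in>space \<mu>. (\<Sum>i<d. a i * v i) = (\<Sum>i<d. a i) / 2} = 1 \<longleftrightarrow>
      (AE v in \<mu>. (\<Sum>i<d. a i * v i) = (\<Sum>i<d. a i) / 2)"
    by (subst prob_eq_1) (auto intro: AE_cong)
  also have "\<dots> \<longleftrightarrow> (AE v in \<mu>. lincomb_dev a v = 0)"
    by (simp add: dev)
  finally show ?thesis unfolding is_CM_def copula_distr_self lincomb_var_eq_0_iff .
qed

lemma AE_coordinate_mult_nonneg:
  assumes "i < d" "j < d"
  shows "AE v in \<mu>. 0 \<le> v i * v j"
  using AE_coordinate_pos[OF assms(1)] AE_coordinate_pos[OF assms(2)] by eventually_elim simp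

text \<open>Hoeffding's formula E[U_i U_j] = \<integral>\<integral> P(U_i > s, U_j > t) ds dt, by Fubini.\<close>

lemma moment_eq_integral_survival:
  assumes ij: "i < d" "j < d"
  shows "ennreal (\<integral>v. v i * v j \<partial>\<mu>) =
    (\<integral>\<^sup>+ p. indicator ({0..1}\<times>{0..1}) p * ennreal (prob {v\<in>space \<mu>. fst p < v i \<and> snd p < v j})
      \<partial>(lborel \<Otimes>\<^sub>M lborel))"
proof -
  define g where "g v p = indicator ({0..1::real}\<times>{0..1::real}) p * (indicator {v. fst p < v i \<and> snd p < v j} v :: ennreal)"
    for v :: "nat \<Rightarrow> real" and p
  interpret L: pair_sigma_finite \<mu> "lborel \<Otimes>\<^sub>M lborel"
    by (intro pair_sigma_finite.intro sigma_finite_measure_axioms sigma_finite_pair_measure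
        lborel.sigma_finite_measure_axioms)
  have "ennreal (\<integral>v. v i * v j \<partial>\<mu>) = (\<integral>\<^sup>+ v. ennreal (v i * v j) \<partial>\<mu>)"
    using ij by (intro nn_integral_eq_integral[symmetric] integrable_coordinate_mult AE_coordinate_mult_nonneg)
  also have "\<dots> = (\<integral>\<^sup>+ v. (\<integral>\<^sup>+ p. g v p \<partial>(lborel \<Otimes>\<^sub>M lborel)) \<partial>\<mu>)"
  proof (rule nn_integral_cong_AE)
    show "AE v in \<mu>. ennreal (v i * v j) = (\<integral>\<^sup>+ p. g v p \<partial>(lborel \<Otimes>\<^sub>M lborel))"
      using AE_in_open_cube
    proof eventually_elim
      case (elim v)
      then have b: "0 < v i" "v i < 1" "0 < v j" "v j < 1" using ij by auto
      have "(\<integral>\<^sup>+ p. g v p \<partial>(lborel \<Otimes>\<^sub>M lborel)) =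
          (\<integral>\<^sup>+ p. indicator ({0..<v i} \<times> {0..<v j}) p \<partial>(lborel \<Otimes>\<^sub>M lborel))"
        unfolding g_def using b by (intro nn_integral_cong) (auto split: split_indicator)
      also have "\<dots> = ennreal (v i) * ennreal (v j)"
        using b by (simp add: lborel.emeasure_pair_measure_Times)
      finally show ?case using b by (simp add: ennreal_mult)
    qed
  qed
  also have "\<dots> = (\<integral>\<^sup>+ p. (\<integral>\<^sup>+ v. g v p \<partial>\<mu>) \<partial>(lborel \<Otimes>\<^sub>M lborel))"
    by (rule L.Fubini'[symmetric]) (unfold g_def, use ij in measurable)
  also have "\<dots> = (\<integral>\<^sup>+ p. indicator ({0..1}\<times>{0..1}) p * ennreal (prob {v\<in>space \<mu>. fst p < v i \<and> snd p < v j})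
      \<partial>(lborel \<Otimes>\<^sub>M lborel))"
  proof (rule nn_integral_cong)
    fix p :: "real \<times> real"
    have "(\<integral>\<^sup>+ v. g v p \<partial>\<mu>) = (\<integral>\<^sup>+ v. indicator ({0..1::real}\<times>{0..1::real}) p *
        indicator {v\<in>space \<mu>. fst p < v i \<and> snd p < v j} v \<partial>\<mu>)"
      unfolding g_def by (intro nn_integral_cong) (auto split: split_indicator)
    also have "\<dots> = indicator ({0..1::real}\<times>{0..1::real}) p * emeasure \<mu> {v\<in>space \<mu>. fst p < v i \<and> snd p < v j}"
      using ij by (intro nn_integral_cmult_indicator) measurable
    finally show "(\<integral>\<^sup>+ v. g v p \<partial>\<mu>) = indicator ({0..1}\<times>{0..1}) p * ennreal (prob {v\<in>space \<mu>. fst p < v i \<and> snd p < v j})"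
      by (simp add: emeasure_eq_measure)
  qed
  finally show ?thesis .
qed

lemma prob_pair_survival_eq_copula_surv:
  assumes ij: "i < d" "j < d" "i \<noteq> j"
  shows "prob {v\<in>space \<mu>. s < v i \<and> t < v j} = copula_surv d C (\<lambda>k. if k = i then s else if k = j then t else 0)"
proof -
  define u where "u = (\<lambda>k. if k = i then s else if k = j then t else 0)"
  have u: "u i = s" "u j = t" "\<And>k. k \<noteq> i \<Longrightarrow> k \<noteq> j \<Longrightarrow> u k = 0"
    using ij(3) unfolding u_def by auto
  have "prob {v\<in>space \<mu>. s < v i \<and> t < v j} = prob {v\<in>space \<mu>. \<forall>k<d. u k < v k}"
  proof (rule measure_eq_AE)
    show "AE v in \<mu>. (v \<in> {v\<in>space \<mu>. s < v i \<and> t < v j}) = (v \<in> {v\<in>space \<mu>. \<forall>k<d. u k < v k})"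
      using AE_in_open_cube
    proof eventually_elim
      case (elim v)
      have "(\<forall>k<d. u k < v k) \<longleftrightarrow> s < v i \<and> t < v j"
      proof
        assume "\<forall>k<d. u k < v k"
        then have "u i < v i" "u j < v j" using ij by blast+
        then show "s < v i \<and> t < v j" using u by simp
      next
        assume "s < v i \<and> t < v j"
        then show "\<forall>k<d. u k < v k" using u elim by (metis (full_types))
      qed
      then show ?case by auto
    qed
    show "{v\<in>space \<mu>. s < v i \<and> t < v j} \<in> sets \<mu>" using ij by measurable
    show "{v\<in>space \<mu>. \<forall>k<d. u k < v k} \<in> sets \<mu>" by (rule sets_Collect_all_less) measurable
  qed
  then show ?thesis unfolding copula_surv_eq u_def .
qed

lemma comonotonic_AE_not_between:
  assumes como: "comonotonic_copula d C" and ij: "i < d" "j < d" and q: "0 \<le> q" "q \<le> 1"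
  shows "AE v in \<mu>. \<not> (v i \<le> q \<and> q < v j)"
proof -
  define u where "u k = (if k = i \<or> k = j then q else 1)" for k
  have "u \<in> unit_cube d" using q unfolding u_def unit_cube_def by auto
  moreover have "Min (u ` {..<d}) = q"
    using q ij by (intro Min_eqI) (auto simp: u_def intro!: rev_image_eqI[of i])
  ultimately have "q = prob {v\<in>space \<mu>. \<forall>k<d. v k \<le> u k}"
    using como copula_eq_prob unfolding comonotonic_copula_def by simp
  also have "\<dots> = prob {v\<in>space \<mu>. \<forall>k\<in>{i, j}. v k \<le> u k}"
    using ij by (intro prob_box_restrict[symmetric]) (auto simp: u_def)
  finally have both: "prob {v\<in>space \<mu>. v i \<le> q \<and> v j \<le> q} = q" by (simp add: u_def)
  have "{v\<in>space \<mu>. v i \<le> q \<and> q < v j} = {v\<in>space \<mu>. v i \<le> q} - {v\<in>space \<mu>. v i \<le> q \<and> v j \<le> q}"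
    by auto
  also have "prob \<dots> = 0"
    using ij both prob_coordinate_le[OF ij(1) q] by (subst finite_measure_Diff) auto
  finally have "AE v in \<mu>. v \<notin> {v\<in>space \<mu>. v i \<le> q \<and> q < v j}"
    using ij by (subst prob_eq_0[symmetric]) auto
  then show ?thesis by (auto elim!: AE_mp)
qed

lemma comonotonic_imp_AE_eq:
  assumes como: "comonotonic_copula d C" and ij: "i < d" "j < d"
  shows "AE v in \<mu>. v i = v j"
proof -
  have no_gap: "\<not> a < b"
    if gap: "\<forall>q\<in>\<rat> \<inter> {0..1}. \<not> (a \<le> q \<and> q < b)" and "0 < a" "b < 1" for a b :: real
  proof
    assume "a < b"
    then obtain q where q: "q \<in> \<rat>" "a < q" "q < b" using Rats_dense_in_real by blast
    then have "q \<in> \<rat> \<inter> {0..1}" using \<open>0 < a\<close> \<open>b < 1\<close> by auto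
    then show False using gap q by auto
  qed
  have "AE v in \<mu>. \<forall>q\<in>\<rat> \<inter> {0..1}. \<not> (v i \<le> q \<and> q < v j) \<and> \<not> (v j \<le> q \<and> q < v i)"
    using ij by (intro AE_ball_countable' countable_Int1 countable_rat AE_conjI
        comonotonic_AE_not_between[OF como]) auto
  then show ?thesis using AE_in_open_cube
  proof eventually_elim
    case (elim v)
    then have "0 < v i" "v i < 1" "0 < v j" "v j < 1" using ij by auto
    then have "\<not> v i < v j" "\<not> v j < v i"
      using no_gap[of "v i" "v j"] no_gap[of "v j" "v i"] elim(1) by blast+
    then show ?case by linarith
  qed
qed

lemma AE_eq_imp_comonotonic:
  assumes eq: "\<forall>i<d. AE v in \<mu>. v i = v 0" and d: "0 < d"
  shows "comonotonic_copula d C"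
  unfolding comonotonic_copula_def
proof
  fix u assume u: "u \<in> unit_cube d"
  have fin: "finite (u ` {..<d})" "u ` {..<d} \<noteq> {}" using d by auto
  have Min01: "0 \<le> Min (u ` {..<d})" "Min (u ` {..<d}) \<le> 1"
    using Min_in[OF fin] u unfolding unit_cube_def by auto
  have all_eq: "AE v in \<mu>. \<forall>i\<in>{..<d}. v i = v 0"
    using eq by (intro AE_finite_allI) auto
  have "prob {v\<in>space \<mu>. \<forall>k<d. v k \<le> u k} = prob {v\<in>space \<mu>. v 0 \<le> Min (u ` {..<d})}"
  proof (rule measure_eq_AE)
    show "AE v in \<mu>. (v \<in> {v\<in>space \<mu>. \<forall>k<d. v k \<le> u k}) = (v \<in> {v\<in>space \<mu>. v 0 \<le> Min (u ` {..<d})})"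
      using all_eq
    proof eventually_elim
      case (elim v)
      have "(\<forall>k<d. v k \<le> u k) \<longleftrightarrow> (\<forall>k\<in>{..<d}. v 0 \<le> u k)" using elim by (metis lessThan_iff)
      also have "\<dots> \<longleftrightarrow> (\<forall>a\<in>u ` {..<d}. v 0 \<le> a)" by blast
      also have "\<dots> \<longleftrightarrow> v 0 \<le> Min (u ` {..<d})" using Min_ge_iff[OF fin] by simp
      finally show ?case by blast
    qed
    show "{v\<in>space \<mu>. \<forall>k<d. v k \<le> u k} \<in> sets \<mu>" by (rule sets_Collect_all_less) measurable
    show "{v\<in>space \<mu>. v 0 \<le> Min (u ` {..<d})} \<in> sets \<mu>" using d by measurable
  qed
  also have "\<dots> = Min (u ` {..<d})" by (rule prob_coordinate_le[OF d Min01])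
  finally show "C u = Min (u ` {..<d})" using copula_eq_prob[OF u] by simp
qed

lemma comonotonic_iff_coord_cov:
  assumes "0 < d"
  shows "comonotonic_copula d C \<longleftrightarrow> (\<forall>i j. i < j \<and> j < d \<longrightarrow> coord_cov i j = 1/12)"
proof
  assume como: "comonotonic_copula d C"
  show "\<forall>i j. i < j \<and> j < d \<longrightarrow> coord_cov i j = 1/12"
  proof (intro allI impI)
    fix i j assume "i < j \<and> j < d"
    then have ij: "i < d" "j < d" by auto
    have "coord_cov i j = coord_cov i i" unfolding coord_cov_def
      using comonotonic_imp_AE_eq[OF como ij] by (intro integral_cong_AE) (use ij in \<open>auto elim: AE_mp\<close>)
    then show "coord_cov i j = 1/12" using coord_cov_diag ij by simp
  qed
next
  assume cov: "\<forall>i j. i < j \<and> j < d \<longrightarrow> coord_cov i j = 1/12"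
  have "AE v in \<mu>. v i = v 0" if "i < d" for i
  proof (cases "i = 0")
    case False
    then have "AE v in \<mu>. v 0 = v i" using cov that by (intro coord_cov_eq_imp_AE_eq) auto
    then show ?thesis by (auto elim: AE_mp)
  qed simp
  then show "comonotonic_copula d C" using AE_eq_imp_comonotonic assms by blast
qed

end

lemma coord_cov_mono:
  assumes law1: "copula_law d \<mu>1 C1" and law2: "copula_law d \<mu>2 C2" and prec: "copula_prec d C1 C2"
    and ij: "i < d" "j < d" "i \<noteq> j"
  shows "copula_law.coord_cov \<mu>1 i j \<le> copula_law.coord_cov \<mu>2 i j"
proof -
  interpret A: copula_law d \<mu>1 C1 by fact
  interpret B: copula_law d \<mu>2 C2 by fact
  have surv: "indicator ({0..1}\<times>{0..1}) p * ennreal (A.prob {v\<in>space \<mu>1. fst p < v i \<and> snd p < v j})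
      \<le> indicator ({0..1}\<times>{0..1}) p * ennreal (B.prob {v\<in>space \<mu>2. fst p < v i \<and> snd p < v j})" for p
  proof (cases "p \<in> {0..1::real}\<times>{0..1::real}")
    case True
    define u where "u k = (if k = i then fst p else if k = j then snd p else 0)" for k
    have "u \<in> unit_cube d" using True unfolding u_def unit_cube_def by auto
    then have "copula_surv d C1 u \<le> copula_surv d C2 u" using prec unfolding copula_prec_def by auto
    then show ?thesis
      using True unfolding u_def A.prob_pair_survival_eq_copula_surv[OF ij]
        B.prob_pair_survival_eq_copula_surv[OF ij] by (simp add: ennreal_leI)
  qed simp
  have "ennreal (\<integral>v. v i * v j \<partial>\<mu>1) \<le> ennreal (\<integral>v. v i * v j \<partial>\<mu>2)"
    unfolding A.moment_eq_integral_survival[OF ij(1,2)] B.moment_eq_integral_survival[OF ij(1,2)]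
    by (intro nn_integral_mono surv)
  moreover have "0 \<le> (\<integral>v. v i * v j \<partial>\<mu>2)"
    using ij by (intro integral_nonneg_AE B.AE_coordinate_mult_nonneg)
  ultimately have "(\<integral>v. v i * v j \<partial>\<mu>1) \<le> (\<integral>v. v i * v j \<partial>\<mu>2)"
    by (simp add: ennreal_le_iff)
  then show ?thesis using A.coord_cov_eq_moment[OF ij(1,2)] B.coord_cov_eq_moment[OF ij(1,2)] by simp
qed

context copula_law
begin

lemma lincomb_var_cong: "(\<And>i. i < d \<Longrightarrow> a i = b i) \<Longrightarrow> lincomb_var a = lincomb_var b"
proof -
  assume "\<And>i. i < d \<Longrightarrow> a i = b i"
  then have "lincomb_dev a = lincomb_dev b" unfolding lincomb_dev_def by (intro ext sum.cong) auto
  then show ?thesis unfolding lincomb_var_def by simp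
qed

lemma lincomb_var_add_coordinate:
  assumes m: "m < d"
  shows "lincomb_var (\<lambda>i. a i + (if i = m then \<delta> else 0)) =
    lincomb_var a + 2 * \<delta> * (\<Sum>i<d. a i * coord_cov i m) + \<delta>\<^sup>2 / 12"
proof -
  have dev: "lincomb_dev (\<lambda>i. a i + (if i = m then \<delta> else 0)) v = lincomb_dev a v + \<delta> * (v m - 1/2)" for v
  proof -
    have "lincomb_dev (\<lambda>i. a i + (if i = m then \<delta> else 0)) v =
        (\<Sum>i<d. a i * (v i - 1/2) + (if i = m then \<delta> * (v m - 1/2) else 0))"
      unfolding lincomb_dev_def by (intro sum.cong refl) (simp add: distrib_right)
    also have "\<dots> = lincomb_dev a v + \<delta> * (v m - 1/2)"
      unfolding lincomb_dev_def sum.distrib using m by simp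
    finally show ?thesis .
  qed
  have "lincomb_var (\<lambda>i. a i + (if i = m then \<delta> else 0)) =
      (\<integral>v. (lincomb_dev a v)\<^sup>2 + (2 * \<delta>) * (lincomb_dev a v * (v m - 1/2))
        + \<delta>\<^sup>2 * ((v m - 1/2) * (v m - 1/2)) \<partial>\<mu>)"
    unfolding lincomb_var_def dev
    by (intro Bochner_Integration.integral_cong refl) (simp add: power2_eq_square algebra_simps)
  also have "\<dots> = lincomb_var a + (2 * \<delta>) * (\<integral>v. lincomb_dev a v * (v m - 1/2) \<partial>\<mu>) + \<delta>\<^sup>2 * coord_cov m m"
    unfolding lincomb_var_def coord_cov_def
    using m integrable_lincomb_dev_square integrable_lincomb_dev_mult integrable_centred_mult
    by (simp add: integrable_add integrable_mult_right)
  also have "\<dots> = lincomb_var a + 2 * \<delta> * (\<Sum>i<d. a i * coord_cov i m) + \<delta>\<^sup>2 / 12"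
    using integral_lincomb_dev_mult[OF m] coord_cov_diag[OF m] by simp
  finally show ?thesis .
qed

lemma lincomb_var_lower_bound:
  assumes d: "0 < d" and wpos: "\<forall>i<d. 0 < w i"
  shows "lfun d w \<le> lincomb_var w \<and> (lincomb_var w = lfun d w \<longleftrightarrow> lincomb_var (wstar d w) = 0)"
proof -
  define S where "S = (\<Sum>i<d. w i)"
  have "Max (w ` {..<d}) \<in> w ` {..<d}" using d by (intro Max_in) auto
  then obtain m where m: "m < d" "w m = Max (w ` {..<d})" by auto
  then have w_le: "\<forall>i<d. w i \<le> w m" by simp
  define \<delta> where "\<delta> = max (2 * w m - S) 0"
  define ws where "ws = wstar d w"
  define B where "B = (\<Sum>i<d. ws i * coord_cov i m)"
  have "lincomb_var w = lincomb_var (\<lambda>i. ws i + (if i = m then \<delta> else 0))"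
    using wstar_decomposition[OF wpos m(1) w_le] unfolding ws_def \<delta>_def S_def
    by (intro lincomb_var_cong) blast
  also have "\<dots> = lincomb_var ws + 2 * (\<delta> * B) + lfun d w"
    unfolding lincomb_var_add_coordinate[OF m(1)] lfun_def B_def \<delta>_def S_def m(2)[symmetric] by simp
  finally have V: "lincomb_var w = lincomb_var ws + 2 * (\<delta> * B) + lfun d w" .
  have "0 \<le> \<delta> * B"
  proof (cases "S < 2 * w m")
    case True
    have ws_m: "ws m = (\<Sum>i\<in>{..<d} - {m}. w i)"
      using wstar_at_max[OF m(1)] True unfolding ws_def S_def by simp
    have ws_i: "ws i = w i" if "i \<in> {..<d} - {m}" for i
      using wstar_decomposition[OF wpos m(1) w_le, of i] that unfolding ws_def by simp
    have "B = ws m * coord_cov m m + (\<Sum>i\<in>{..<d} - {m}. ws i * coord_cov i m)"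
      unfolding B_def using m(1) by (simp add: sum.remove)
    also have "\<dots> = (\<Sum>i\<in>{..<d} - {m}. w i * (1/12 + coord_cov i m))"
      using ws_i unfolding ws_m coord_cov_diag[OF m(1)]
      by (simp add: distrib_left sum.distrib sum_distrib_right)
    also have "\<dots> \<ge> 0"
    proof (intro sum_nonneg mult_nonneg_nonneg)
      fix i assume "i \<in> {..<d} - {m}"
      then show "0 \<le> w i" "0 \<le> 1/12 + coord_cov i m" using wpos coord_cov_ge[of i m] m(1) by auto
    qed
    finally show ?thesis unfolding \<delta>_def by simp
  qed (simp add: \<delta>_def)
  moreover have "B = 0" if "lincomb_var ws = 0"
    unfolding B_def using lincomb_var_eq_0_imp_cov[OF that m(1)] .
  ultimately show ?thesis using V lincomb_var_nonneg[of ws] unfolding ws_def by auto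
qed

lemma weighted_pairs_cov_le:
  assumes wpos: "\<forall>i<d. 0 < w i"
  defines "P \<equiv> (\<Sum>(i, j)\<in>pairs_lt d. w i * w j)"
    and "S \<equiv> (\<Sum>(i, j)\<in>pairs_lt d. w i * w j * coord_cov i j)"
  shows "S \<le> P / 12" and "S = P / 12 \<longleftrightarrow> (\<forall>i j. i < j \<and> j < d \<longrightarrow> coord_cov i j = 1/12)"
proof -
  have gap: "P / 12 - S = (\<Sum>(i, j)\<in>pairs_lt d. w i * w j * (1/12 - coord_cov i j))"
    unfolding P_def S_def
    by (simp add: case_prod_unfold sum_subtractf sum_divide_distrib right_diff_distrib)
  have nonneg: "0 \<le> w i * w j * (1/12 - coord_cov i j)" if "(i, j) \<in> pairs_lt d" for i j
    using that wpos coord_cov_le[of i j] by (auto simp: pairs_lt_def less_imp_le)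
  then show "S \<le> P / 12"
    using sum_nonneg[of "pairs_lt d" "\<lambda>(i, j). w i * w j * (1/12 - coord_cov i j)"] gap by force
  have "S = P / 12 \<longleftrightarrow> P / 12 - S = 0" by auto
  also have "\<dots> \<longleftrightarrow> (\<forall>(i, j)\<in>pairs_lt d. w i * w j * (1/12 - coord_cov i j) = 0)"
    unfolding gap using nonneg by (subst sum_nonneg_eq_0_iff[OF finite_pairs_lt]) auto
  also have "\<dots> \<longleftrightarrow> (\<forall>i j. i < j \<and> j < d \<longrightarrow> coord_cov i j = 1/12)"
  proof -
    have "w i \<noteq> 0" if "i < d" for i using wpos that by force
    then show ?thesis by (auto simp: pairs_lt_def)
  qed
  finally show "S = P / 12 \<longleftrightarrow> (\<forall>i j. i < j \<and> j < d \<longrightarrow> coord_cov i j = 1/12)" .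
qed

end

section \<open>The sample and its probability integral transform\<close>

locale copula_model = copula_law d \<mu> C for d \<mu> C +
  fixes F :: "nat \<Rightarrow> real \<Rightarrow> real" and M :: "'a measure" and X :: "nat \<Rightarrow> 'a \<Rightarrow> real"
  assumes cont_df: "\<forall>i<d. cont_df (F i)"
    and joint_df: "has_joint_df d M X (\<lambda>x. C (\<lambda>i. F i (x i)))"
begin

sublocale M: prob_space M
  using joint_df unfolding has_joint_df_def by auto

lemma measurable_X[measurable]: "i < d \<Longrightarrow> X i \<in> borel_measurable M"
  using joint_df unfolding has_joint_df_def by auto

lemma measurable_F[measurable]: "i < d \<Longrightarrow> F i \<in> borel_measurable borel"
  using cont_df borel_measurable_cont_df by auto

lemma F_nonneg: "i < d \<Longrightarrow> 0 \<le> F i z"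
  using cont_df cont_df_nonneg by auto

lemma F_le_one: "i < d \<Longrightarrow> F i z \<le> 1"
  using cont_df cont_df_le_one by auto

lemma prob_X_le: "M.prob {\<omega>\<in>space M. \<forall>i<d. X i \<omega> \<le> x i} = prob {v\<in>space \<mu>. \<forall>i<d. v i \<le> F i (x i)}"
proof -
  have "(\<lambda>i. F i (x i)) \<in> unit_cube d" using F_nonneg F_le_one unfolding unit_cube_def by auto
  then show ?thesis using joint_df copula_eq_prob unfolding has_joint_df_def by simp
qed

lemma X_le_partial_eq_Union:
  assumes J: "J \<subseteq> {..<d}"
  shows "{\<omega>\<in>space M. \<forall>i\<in>J. X i \<omega> \<le> x i} =
    (\<Union>n. {\<omega>\<in>space M. \<forall>i<d. X i \<omega> \<le> (if i \<in> J then x i else real n)})"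
proof (intro equalityI subsetI)
  fix \<omega> assume \<omega>: "\<omega> \<in> {\<omega>\<in>space M. \<forall>i\<in>J. X i \<omega> \<le> x i}"
  obtain n :: nat where n: "(\<Sum>i<d. \<bar>X i \<omega>\<bar>) \<le> real n" using real_arch_simple by blast
  have "X i \<omega> \<le> (if i \<in> J then x i else real n)" if "i < d" for i
  proof (cases "i \<in> J")
    case False
    have "X i \<omega> \<le> (\<Sum>i<d. \<bar>X i \<omega>\<bar>)"
      using that member_le_sum[of i "{..<d}" "\<lambda>i. \<bar>X i \<omega>\<bar>"] by force
    then show ?thesis using n False by simp
  qed (use \<omega> in auto)
  then show "\<omega> \<in> (\<Union>n. {\<omega>\<in>space M. \<forall>i<d. X i \<omega> \<le> (if i \<in> J then x i else real n)})"
    using \<omega> by (intro UN_I[of n]) auto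
qed (use J in auto)

lemma prob_F_partial_eq_Union:
  assumes J: "J \<subseteq> {..<d}"
  shows "prob {v\<in>space \<mu>. \<forall>i\<in>J. v i \<le> F i (x i)} =
    prob (\<Union>n. {v\<in>space \<mu>. \<forall>i<d. v i \<le> F i (if i \<in> J then x i else real n)})"
proof (rule measure_eq_AE)
  show "AE v in \<mu>. (v \<in> {v\<in>space \<mu>. \<forall>i\<in>J. v i \<le> F i (x i)}) =
      (v \<in> (\<Union>n. {v\<in>space \<mu>. \<forall>i<d. v i \<le> F i (if i \<in> J then x i else real n)}))"
    using AE_in_open_cube
  proof eventually_elim
    case (elim v)
    show ?case
    proof
      assume v: "v \<in> {v\<in>space \<mu>. \<forall>i\<in>J. v i \<le> F i (x i)}"
      have "eventually (\<lambda>n. v k < F k (real n)) sequentially" if "k \<in> {..<d}" for k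
      proof -
        have "((\<lambda>n. F k (real n)) \<longlongrightarrow> 1) sequentially"
          using cont_df that unfolding cont_df_def
          by (auto intro: filterlim_compose[OF _ filterlim_real_sequentially])
        then show ?thesis using elim that by (intro order_tendstoD(1)) auto
      qed
      then have "eventually (\<lambda>n. \<forall>k\<in>{..<d}. v k < F k (real n)) sequentially"
        by (intro eventually_ball_finite) auto
      then obtain n where n: "\<forall>k\<in>{..<d}. v k < F k (real n)"
        by (auto simp: eventually_sequentially)
      then have "\<forall>k<d. v k \<le> F k (if k \<in> J then x k else real n)"
        using v by (auto intro: less_imp_le)
      then show "v \<in> (\<Union>n. {v\<in>space \<mu>. \<forall>i<d. v i \<le> F i (if i \<in> J then x i else real n)})"
        using v by (intro UN_I[of n]) auto
    qed (use J in auto)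
  qed
  show "{v\<in>space \<mu>. \<forall>i\<in>J. v i \<le> F i (x i)} \<in> sets \<mu>"
    using J finite_subset[OF J] by (intro sets.sets_Collect_finite_All) (auto, measurable)
  show "(\<Union>n. {v\<in>space \<mu>. \<forall>i<d. v i \<le> F i (if i \<in> J then x i else real n)}) \<in> sets \<mu>"
    by (intro sets.countable_UN' sets_Collect_all_less) (auto, measurable)
qed

lemma prob_X_le_partial:
  assumes J: "J \<subseteq> {..<d}"
  shows "M.prob {\<omega>\<in>space M. \<forall>i\<in>J. X i \<omega> \<le> x i} = prob {v\<in>space \<mu>. \<forall>i\<in>J. v i \<le> F i (x i)}"
proof -
  define y where "y n i = (if i \<in> J then x i else real n)" for n :: nat and i
  define A where "A n = {\<omega>\<in>space M. \<forall>i<d. X i \<omega> \<le> y n i}" for n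
  define B where "B n = {v\<in>space \<mu>. \<forall>i<d. v i \<le> F i (y n i)}" for n
  have "incseq A"
    by (rule incseq_SucI) (auto simp: A_def y_def intro: order_trans)
  moreover have "A n \<in> sets M" for n unfolding A_def by (rule sets_Collect_all_less) measurable
  ultimately have "(\<lambda>n. M.prob (A n)) \<longlonglongrightarrow> M.prob (\<Union>n. A n)"
    by (intro M.finite_Lim_measure_incseq) auto
  moreover have "incseq B"
  proof (rule incseq_SucI)
    fix n
    have "F i (y n i) \<le> F i (y (Suc n) i)" if "i < d" for i
      using cont_df that unfolding cont_df_def y_def by (auto intro: monoD)
    then show "B n \<subseteq> B (Suc n)" unfolding B_def by (auto intro: order_trans)
  qed
  moreover have "B n \<in> sets \<mu>" for n unfolding B_def by (rule sets_Collect_all_less) measurable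
  ultimately have "(\<lambda>n. M.prob (A n)) \<longlonglongrightarrow> prob (\<Union>n. B n)"
    unfolding A_def B_def prob_X_le by (intro finite_Lim_measure_incseq) auto
  then have "M.prob (\<Union>n. A n) = prob (\<Union>n. B n)"
    using \<open>(\<lambda>n. M.prob (A n)) \<longlonglongrightarrow> M.prob (\<Union>n. A n)\<close> LIMSEQ_unique by blast
  then show ?thesis
    unfolding A_def B_def y_def X_le_partial_eq_Union[OF J, symmetric] prob_F_partial_eq_Union[OF J, symmetric] .
qed

lemma prob_transform_le_pos:
  assumes u: "u \<in> unit_cube d" "\<forall>i<d. 0 < u i"
  shows "M.prob {\<omega>\<in>space M. \<forall>i<d. F i (X i \<omega>) \<le> u i} = prob {v\<in>space \<mu>. \<forall>i<d. v i \<le> u i}"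
proof -
  define J where "J = {i. i < d \<and> u i < 1}"
  have J: "J \<subseteq> {..<d}" unfolding J_def by auto
  have u1: "1 \<le> u i" if "i < d" "i \<notin> J" for i using that unfolding J_def by auto
  have "\<exists>x. F i x = u i \<and> (\<forall>z. F i z \<le> u i \<longleftrightarrow> z \<le> x)" if "i \<in> J" for i
    using that cont_df u(2) unfolding J_def by (intro cont_df_quantile) auto
  then obtain x where x: "\<And>i. i \<in> J \<Longrightarrow> F i (x i) = u i"
    and x_le: "\<And>i z. i \<in> J \<Longrightarrow> F i z \<le> u i \<longleftrightarrow> z \<le> x i"
    by metis
  have "{\<omega>\<in>space M. \<forall>i<d. F i (X i \<omega>) \<le> u i} = {\<omega>\<in>space M. \<forall>i\<in>J. X i \<omega> \<le> x i}"
  proof (intro Collect_cong conj_cong refl iffI ballI allI impI)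
    fix \<omega> i assume "\<forall>i<d. F i (X i \<omega>) \<le> u i" "i \<in> J"
    then show "X i \<omega> \<le> x i" using x_le J by blast
  next
    fix \<omega> i assume "\<forall>i\<in>J. X i \<omega> \<le> x i" "i < d"
    then show "F i (X i \<omega>) \<le> u i"
      using x_le u1 F_le_one[of i "X i \<omega>"] by (cases "i \<in> J") force+
  qed
  also have "M.prob \<dots> = prob {v\<in>space \<mu>. \<forall>i\<in>J. v i \<le> F i (x i)}"
    by (rule prob_X_le_partial[OF J])
  also have "\<dots> = prob {v\<in>space \<mu>. \<forall>i\<in>J. v i \<le> u i}"
    using x by (intro arg_cong[where f=prob]) auto
  also have "\<dots> = prob {v\<in>space \<mu>. \<forall>i<d. v i \<le> u i}"
    by (rule prob_box_restrict[OF J u1])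
  finally show ?thesis .
qed

lemma prob_transform_le:
  assumes u: "u \<in> unit_cube d"
  shows "M.prob {\<omega>\<in>space M. \<forall>i<d. F i (X i \<omega>) \<le> u i} = prob {v\<in>space \<mu>. \<forall>i<d. v i \<le> u i}"
proof (cases "\<forall>i<d. 0 < u i")
  case True then show ?thesis using prob_transform_le_pos u by blast
next
  case False
  then obtain k where k: "k < d" "u k = 0" using u unfolding unit_cube_def by force
  have "prob {v\<in>space \<mu>. \<forall>i<d. v i \<le> u i} \<le> prob {v\<in>space \<mu>. v k \<le> 0}"
    using k by (intro finite_measure_mono) auto
  then have rhs: "prob {v\<in>space \<mu>. \<forall>i<d. v i \<le> u i} = 0"
    using prob_coordinate_le[OF k(1), of 0] by (simp add: measure_le_0_iff)
  have "M.prob {\<omega>\<in>space M. \<forall>i<d. F i (X i \<omega>) \<le> u i} \<le> 0"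
  proof (rule dense_ge_bounded[of 0 1])
    fix t :: real assume t: "0 < t" "t < 1"
    define u' where "u' i = (if i = k then t else 1)" for i
    have u': "u' \<in> unit_cube d" "\<forall>i<d. 0 < u' i" using t unfolding u'_def unit_cube_def by auto
    have "M.prob {\<omega>\<in>space M. \<forall>i<d. F i (X i \<omega>) \<le> u i} \<le> M.prob {\<omega>\<in>space M. \<forall>i<d. F i (X i \<omega>) \<le> u' i}"
      using k t F_le_one unfolding u'_def
      by (intro M.finite_measure_mono sets_Collect_all_less) (auto, measurable)
    also have "\<dots> = t"
      using prob_transform_le_pos[OF u'] prob_box_single[OF k(1), of t] t unfolding u'_def by simp
    finally show "M.prob {\<omega>\<in>space M. \<forall>i<d. F i (X i \<omega>) \<le> u i} \<le> t" .
  qed simp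
  then show ?thesis using rhs by (simp add: measure_le_0_iff)
qed

definition transform :: "'a \<Rightarrow> nat \<Rightarrow> real" where
  "transform \<omega> = (\<lambda>i\<in>{..<d}. F i (X i \<omega>))"

lemma measurable_transform[measurable]: "transform \<in> measurable M (Pi\<^sub>M {..<d} (\<lambda>_. borel))"
  unfolding transform_def by (intro measurable_restrict) measurable

lemma distr_transform: "distr M (Pi\<^sub>M {..<d} (\<lambda>_. borel)) transform = \<mu>"
proof (rule copula_measure_unique[OF _ copula_measure])
  let ?N = "distr M (Pi\<^sub>M {..<d} (\<lambda>_. borel)) transform"
  have box: "measure ?N {v\<in>space ?N. \<forall>i<d. v i \<le> u i} = prob {v\<in>space \<mu>. \<forall>i<d. v i \<le> u i}"
    if "u \<in> unit_cube d" for u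
  proof -
    have "{v\<in>space ?N. \<forall>i<d. v i \<le> u i} \<in> sets (Pi\<^sub>M {..<d} (\<lambda>_. borel))"
      using sets_Collect_all_less[of d "Pi\<^sub>M {..<d} (\<lambda>_. borel)" "\<lambda>i v. v i \<le> u i"] by simp
    then have "measure ?N {v\<in>space ?N. \<forall>i<d. v i \<le> u i} =
        M.prob (transform -` {v\<in>space ?N. \<forall>i<d. v i \<le> u i} \<inter> space M)"
      by (rule measure_distr[OF measurable_transform])
    also have "transform -` {v\<in>space ?N. \<forall>i<d. v i \<le> u i} \<inter> space M = {\<omega>\<in>space M. \<forall>i<d. F i (X i \<omega>) \<le> u i}"
      using measurable_space[OF measurable_transform] by (auto simp: transform_def)
    finally show ?thesis using prob_transform_le[OF that] by simp
  qed
  show "copula_measure d ?N C"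
    unfolding copula_measure_def
  proof (intro conjI ballI allI impI)
    show "prob_space ?N" by (intro M.prob_space_distr measurable_transform)
    show "sets ?N = sets (Pi\<^sub>M {..<d} (\<lambda>_. borel))" by simp
  next
    fix u assume u: "u \<in> unit_cube d"
    show "C u = measure ?N {v\<in>space ?N. \<forall>i<d. v i \<le> u i}" using box[OF u] copula_eq_prob[OF u] by simp
  next
    fix i t assume i: "i < d" and t: "t \<in> {0..1::real}"
    define u where "u k = (if k = i then t else 1)" for k
    have u: "u \<in> unit_cube d" using t unfolding u_def unit_cube_def by auto
    have "{v\<in>space ?N. v i \<le> t} \<in> sets (Pi\<^sub>M {..<d} (\<lambda>_. borel))"
      using i by simp measurable
    then have "measure ?N {v\<in>space ?N. v i \<le> t} = M.prob (transform -` {v\<in>space ?N. v i \<le> t} \<inter> space M)"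
      by (rule measure_distr[OF measurable_transform])
    also have "transform -` {v\<in>space ?N. v i \<le> t} \<inter> space M = {\<omega>\<in>space M. \<forall>k<d. F k (X k \<omega>) \<le> u k}"
      using measurable_space[OF measurable_transform] i F_le_one unfolding u_def by (auto simp: transform_def)
    also have "M.prob \<dots> = t"
      using prob_transform_le[OF u] prob_box_single[OF i, of t] t unfolding u_def by simp
    finally show "measure ?N {v\<in>space ?N. v i \<le> t} = t" .
  qed
qed

lemma integral_transform:
  "f \<in> borel_measurable (Pi\<^sub>M {..<d} (\<lambda>_. borel)) \<Longrightarrow> (\<integral>\<omega>. f (transform \<omega>) \<partial>M) = (\<integral>v. f v \<partial>\<mu>)"
  for f :: "(nat \<Rightarrow> real) \<Rightarrow> real"
  using integral_distr[OF measurable_transform, of f] distr_transform by simp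

lemma spearman_rho_eq: "i < d \<Longrightarrow> j < d \<Longrightarrow> spearman_rho M F X i j = 12 * coord_cov i j"
proof -
  assume ij: "i < d" "j < d"
  have [measurable]: "k < d \<Longrightarrow> (\<lambda>v. v k) \<in> borel_measurable (Pi\<^sub>M {..<d} (\<lambda>_. borel::real measure))" for k
    by (intro measurable_component_singleton) auto
  have F_X: "F k (X k \<omega>) = transform \<omega> k" if "k < d" for k \<omega> using that by (simp add: transform_def)
  have mean: "(\<integral>\<omega>. F k (X k \<omega>) \<partial>M) = 1/2" if "k < d" for k
    using that integral_transform[of "\<lambda>v. v k"] expectation_coordinate[OF that] by (simp add: F_X)
  have "covariance M (\<lambda>\<omega>. F i (X i \<omega>)) (\<lambda>\<omega>. F j (X j \<omega>)) =
      (\<integral>\<omega>. (\<lambda>v. (v i - 1/2) * (v j - 1/2)) (transform \<omega>) \<partial>M)"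
    unfolding covariance_def mean[OF ij(1)] mean[OF ij(2)] using ij by (simp add: F_X)
  also have "\<dots> = coord_cov i j" unfolding coord_cov_def using ij by (intro integral_transform) measurable
  finally show ?thesis unfolding spearman_rho_def by simp
qed

section \<open>The herd behaviour index\<close>

lemma SIX_eq_weighted_pairs:
  "SIX d w M F X = 12 * (\<Sum>(i, j)\<in>pairs_lt d. w i * w j * coord_cov i j) / (\<Sum>(i, j)\<in>pairs_lt d. w i * w j)"
proof -
  have "(\<Sum>(i, j)\<in>pairs_lt d. w i * w j * spearman_rho M F X i j) =
      (\<Sum>(i, j)\<in>pairs_lt d. 12 * (w i * w j * coord_cov i j))"
    by (intro sum.cong refl) (auto simp: pairs_lt_def spearman_rho_eq)
  then show ?thesis unfolding SIX_def by (simp add: sum_distrib_left case_prod_unfold)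
qed

lemma SIX_eq_lincomb_var:
  "SIX d w M F X = (12 * lincomb_var w - (\<Sum>i<d. (w i)\<^sup>2)) / ((\<Sum>i<d. w i)\<^sup>2 - (\<Sum>i<d. (w i)\<^sup>2))"
proof -
  have "lincomb_var w = (\<Sum>i<d. w i * w i * coord_cov i i) + 2 * (\<Sum>(i, j)\<in>pairs_lt d. w i * w j * coord_cov i j)"
    unfolding lincomb_var_expand by (rule sum_sym_eq_diag_plus_pairs) (simp add: coord_cov_sym)
  also have "(\<Sum>i<d. w i * w i * coord_cov i i) = (\<Sum>i<d. (w i)\<^sup>2) / 12"
    by (simp add: coord_cov_diag power2_eq_square sum_divide_distrib)
  finally show ?thesis
    unfolding SIX_eq_weighted_pairs square_sum_eq_sum_squares_plus_pairs by simp
qed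

lemma SIX_le_one:
  assumes "2 \<le> d" "\<forall>i<d. 0 < w i"
  shows "SIX d w M F X \<le> 1"
  unfolding SIX_eq_weighted_pairs
  using weighted_pairs_cov_le(1)[OF assms(2)] sum_pairs_weights_pos[OF assms] by simp

lemma SIX_eq_one_iff_comonotonic:
  assumes "2 \<le> d" "\<forall>i<d. 0 < w i"
  shows "SIX d w M F X = 1 \<longleftrightarrow> comonotonic_copula d C"
proof -
  have "0 < d" using assms(1) by simp
  then show ?thesis
    unfolding SIX_eq_weighted_pairs comonotonic_iff_coord_cov[OF \<open>0 < d\<close>]
    using weighted_pairs_cov_le(2)[OF assms(2)] sum_pairs_weights_pos[OF assms] by (auto simp: field_simps)
qed

end

lemma SIX_mono:
  assumes A: "copula_model d \<mu>1 C1 F M X" and B: "copula_model d \<mu>2 C2 F Ms Xs"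
    and wpos: "\<forall>i<d. 0 < w i" and prec: "copula_prec d C1 C2"
  shows "SIX d w M F X \<le> SIX d w Ms F Xs"
proof -
  interpret A: copula_model d \<mu>1 C1 F M X by fact
  interpret B: copula_model d \<mu>2 C2 F Ms Xs by fact
  have "(\<Sum>(i, j)\<in>pairs_lt d. w i * w j * A.coord_cov i j) \<le> (\<Sum>(i, j)\<in>pairs_lt d. w i * w j * B.coord_cov i j)"
  proof (rule sum_mono)
    fix x assume "x \<in> pairs_lt d"
    then obtain i j where x: "x = (i, j)" "i < j" "j < d" unfolding pairs_lt_def by auto
    then have "A.coord_cov i j \<le> B.coord_cov i j"
      using coord_cov_mono[OF A.copula_law_axioms B.copula_law_axioms prec] by simp
    then show "(case x of (i, j) \<Rightarrow> w i * w j * A.coord_cov i j) \<le> (case x of (i, j) \<Rightarrow> w i * w j * B.coord_cov i j)"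
      using x wpos by (simp add: mult_left_mono less_imp_le)
  qed
  then show ?thesis
    unfolding A.SIX_eq_weighted_pairs B.SIX_eq_weighted_pairs
    by (intro divide_right_mono) (auto intro!: sum_nonneg simp: pairs_lt_def less_imp_le wpos)
qed

theorem mainTheorem12:
  fixes d :: nat and w :: "nat \<Rightarrow> real" and F :: "nat \<Rightarrow> real \<Rightarrow> real"
    and C Cs :: "(nat \<Rightarrow> real) \<Rightarrow> real"
    and M :: "'a measure" and X :: "nat \<Rightarrow> 'a \<Rightarrow> real"
    and Ms :: "'b measure" and Xs :: "nat \<Rightarrow> 'b \<Rightarrow> real"
  assumes "d \<ge> 2"
    and "\<forall>i<d. w i > 0"
    and "\<forall>i<d. cont_df (F i)"
    and "is_copula d C" and "is_copula d Cs"
    and "has_joint_df d M X (\<lambda>x. C (\<lambda>i. F i (x i)))"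
    and "has_joint_df d Ms Xs (\<lambda>x. Cs (\<lambda>i. F i (x i)))"
  defines "S1 \<equiv> (\<Sum>i<d. w i)" and "S2 \<equiv> (\<Sum>i<d. (w i)\<^sup>2)"
  shows "(copula_prec d C Cs \<longrightarrow> SIX d w M F X \<le> SIX d w Ms F Xs)
    \<and> ((12 * lfun d w - S2) / (S1\<^sup>2 - S2) \<le> SIX d w M F X \<and> SIX d w M F X \<le> 1)
    \<and> (SIX d w M F X = 1 \<longleftrightarrow> comonotonic_copula d C)
    \<and> (SIX d w M F X = (12 * lfun d w - S2) / (S1\<^sup>2 - S2) \<longleftrightarrow> is_CM d (wstar d w) C)"
proof -
  obtain \<mu> \<mu>s where "copula_measure d \<mu> C" "copula_measure d \<mu>s Cs"
    using assms(4,5) unfolding is_copula_def by blast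
  then have A: "copula_model d \<mu> C F M X" and B: "copula_model d \<mu>s Cs F Ms Xs"
    using assms(3,6,7) by (simp_all add: copula_model_def copula_model_axioms_def copula_law_def)
  interpret A: copula_model d \<mu> C F M X by (fact A)
  have den: "0 < S1\<^sup>2 - S2"
    unfolding S1_def S2_def square_sum_eq_sum_squares_plus_pairs
    using sum_pairs_weights_pos[OF assms(1,2)] by simp
  have SIX: "SIX d w M F X = (12 * A.lincomb_var w - S2) / (S1\<^sup>2 - S2)"
    unfolding S1_def S2_def by (rule A.SIX_eq_lincomb_var)
  have lower: "lfun d w \<le> A.lincomb_var w \<and> (A.lincomb_var w = lfun d w \<longleftrightarrow> A.lincomb_var (wstar d w) = 0)"
    using A.lincomb_var_lower_bound[of w] assms(1,2) by simp
  have "(12 * lfun d w - S2) / (S1\<^sup>2 - S2) \<le> SIX d w M F X"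
    unfolding SIX using lower den by (intro divide_right_mono) auto
  moreover have "SIX d w M F X = (12 * lfun d w - S2) / (S1\<^sup>2 - S2) \<longleftrightarrow> is_CM d (wstar d w) C"
    unfolding SIX A.is_CM_iff_lincomb_var_eq_0 using lower den by (simp add: divide_cancel_right)
  ultimately show ?thesis
    using SIX_mono[OF A B assms(2)] A.SIX_le_one[OF assms(1,2)] A.SIX_eq_one_iff_comonotonic[OF assms(1,2)]
    by blast
qed

end
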